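(* Let $n\ge2$, let $A\in\mathbb{R}^{n\times n}$ be Metzler, output unstable and nonsingular, $b_0\in\mathbb{R}^n_{\ge0}$, $r>0$, $g_0:=-e_n^TA^{-1}b_0$, $g_n:=-e_n^TA^{-1}e_n$, $u_*:=(g_0-r)/(g_nr)$. Then $\bar A:=A-u_*e_ne_n^T$ is Hurwitz stable if and only if $g_0<0$.
   Context: $S:=[e_1\ \cdots\ e_{n-1}]$, $e_i$ standard basis vectors. Metzler: all off-diagonal entries nonnegative. Hurwitz stable: all eigenvalues have negative real part. $M$ is output unstable if $S^TMS$ is Hurwitz stable and $e_n^TMe_n>0$. *)

theory Defs
  imports "Jordan_Normal_Form.Matrix" "Jordan_Normal_Form.Char_Poly"
begin

definition metzler :: "real mat \<Rightarrow> bool" where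
  "metzler M \<longleftrightarrow> (\<forall>i < dim_row M. \<forall>j < dim_col M. i \<noteq> j \<longrightarrow> 0 \<le> M $$ (i, j))"

definition hurwitz :: "real mat \<Rightarrow> bool" where
  "hurwitz M \<longleftrightarrow> square_mat M \<and>
     (\<forall>z. eigenvalue (map_mat complex_of_real M) z \<longrightarrow> Re z < 0)"

definition S_mat :: "nat \<Rightarrow> real mat" where
  "S_mat n = mat n (n - 1) (\<lambda>(i, j). if i = j then 1 else 0)"

definition e_last :: "nat \<Rightarrow> real vec" where
  "e_last n = unit_vec n (n - 1)"

definition output_unstable :: "real mat \<Rightarrow> bool" where
  "output_unstable M \<longleftrightarrow>
     (let n = dim_row M in
       hurwitz (transpose_mat (S_mat n) * M * S_mat n) \<and>
       e_last n \<bullet> (M *\<^sub>v e_last n) > 0)"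

definition En_mat :: "nat \<Rightarrow> real mat" where
  "En_mat n = mat n n (\<lambda>(i, j). e_last n $ i * e_last n $ j)"

end

theory Submission
  imports Defs "Jordan_Normal_Form.Spectral_Radius"
begin

text \<open>
  For a Metzler matrix M two facts do the work. A positive vector v with M v < 0 forces M to be
  Hurwitz (a Gershgorin estimate weighted by v). Conversely, if M is Hurwitz then M x \<ge> 0 implies
  x \<le> 0: for large c the matrix (M + c I) / c is entrywise nonnegative with spectrum in the open
  unit disc, so iterating x \<le> (M + c I) x / c drives x to 0 from above.

  Output instability makes the leading block L of A Hurwitz, and A - u e_n e_n^T differs from A only
  in its last diagonal entry. Both facts together show that it is Hurwitz iff the Schur complement
  of L in it is negative. With t = e_n^T A^-1 e_n = -g_n > 0 this Schur complement equals
  1/t - u = g_0 / (t r), which has the sign of g_0.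
\<close>

lemma mult_mat_vec_index_sum:
  "A \<in> carrier_mat m k \<Longrightarrow> v \<in> carrier_vec k \<Longrightarrow> i < m \<Longrightarrow>
   (A *\<^sub>v v) $ i = (\<Sum>j<k. A $$ (i, j) * v $ j)"
  by (auto simp: scalar_prod_def atLeast0LessThan)

lemma metzlerD: "metzler M \<Longrightarrow> M \<in> carrier_mat m m \<Longrightarrow> i < m \<Longrightarrow> j < m \<Longrightarrow> i \<noteq> j \<Longrightarrow> 0 \<le> M $$ (i, j)"
  unfolding metzler_def by auto

lemma metzler_eigenvector_row_bound:
  assumes M: "M \<in> carrier_mat m m" and met: "metzler M"
    and w: "w \<in> carrier_vec m" and eig: "map_mat complex_of_real M *\<^sub>v w = z \<cdot>\<^sub>v w"
    and v: "v \<in> carrier_vec m" and i: "i < m"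
    and dom: "\<And>j. j < m \<Longrightarrow> cmod (w $ j) \<le> \<rho> * v $ j"
  shows "cmod (z - M $$ (i, i)) * cmod (w $ i) \<le> \<rho> * ((M *\<^sub>v v) $ i - M $$ (i, i) * v $ i)"
proof -
  let ?O = "{..<m} - {i}"
  have split: "(\<Sum>j<m. g j) = g i + (\<Sum>j\<in>?O. g j)" for g :: "nat \<Rightarrow> 'b::comm_monoid_add"
    using i by (simp add: sum.remove)
  have off: "0 \<le> M $$ (i, j)" if "j \<in> ?O" for j
    using metzlerD[OF met M i] that by auto
  have "z * w $ i = (map_mat complex_of_real M *\<^sub>v w) $ i"
    using eig w i by simp
  also have "\<dots> = (\<Sum>j<m. complex_of_real (M $$ (i, j)) * w $ j)"
    using M w i by (subst mult_mat_vec_index_sum[of _ m m]) auto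
  finally have "z * w $ i = (\<Sum>j<m. complex_of_real (M $$ (i, j)) * w $ j)" .
  hence "(z - M $$ (i, i)) * w $ i = (\<Sum>j\<in>?O. complex_of_real (M $$ (i, j)) * w $ j)"
    unfolding split by (simp add: algebra_simps)
  hence "cmod (z - M $$ (i, i)) * cmod (w $ i) = cmod (\<Sum>j\<in>?O. complex_of_real (M $$ (i, j)) * w $ j)"
    by (metis norm_mult)
  also have "\<dots> \<le> (\<Sum>j\<in>?O. M $$ (i, j) * cmod (w $ j))"
    by (rule order_trans[OF norm_sum]) (use off in \<open>simp add: norm_mult\<close>)
  also have "\<dots> \<le> (\<Sum>j\<in>?O. M $$ (i, j) * (\<rho> * v $ j))"
    using off dom by (intro sum_mono mult_left_mono) auto
  also have "\<dots> = \<rho> * ((M *\<^sub>v v) $ i - M $$ (i, i) * v $ i)"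
    unfolding mult_mat_vec_index_sum[OF M v i] split by (simp add: sum_distrib_left algebra_simps)
  finally show ?thesis .
qed

lemma hurwitz_if_metzler_pos_vec:
  assumes M: "M \<in> carrier_mat m m" and met: "metzler M" and v: "v \<in> carrier_vec m"
    and v_pos: "\<And>i. i < m \<Longrightarrow> 0 < v $ i" and Mv_neg: "\<And>i. i < m \<Longrightarrow> (M *\<^sub>v v) $ i < 0"
  shows "hurwitz M"
  unfolding hurwitz_def
proof (intro conjI allI impI)
  show "square_mat M" using M by auto
  fix z assume "eigenvalue (map_mat complex_of_real M) z"
  then obtain w where w: "w \<in> carrier_vec m" "w \<noteq> 0\<^sub>v m"
    and eig: "map_mat complex_of_real M *\<^sub>v w = z \<cdot>\<^sub>v w"
    using M unfolding eigenvalue_def eigenvector_def by auto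
  define f where "f j = cmod (w $ j) / v $ j" for j
  from w obtain j0 where j0: "j0 < m" "w $ j0 \<noteq> 0" by (auto simp: vec_eq_iff)
  obtain i where i: "i < m" and i_max: "\<And>j. j < m \<Longrightarrow> f j \<le> f i"
    using Max_in[of "f ` {..<m}"] Max_ge[of "f ` {..<m}"] j0 by fastforce
  define \<rho> where "\<rho> = f i"
  have dom: "cmod (w $ j) \<le> \<rho> * v $ j" if "j < m" for j
    using i_max[OF that] v_pos[OF that] by (auto simp: \<rho>_def f_def field_simps)
  have "0 < f j0" using j0 v_pos by (auto simp: f_def)
  hence \<rho>_pos: "0 < \<rho>" using i_max[OF j0(1)] by (simp add: \<rho>_def)
  have wi: "cmod (w $ i) = \<rho> * v $ i" using v_pos[OF i] by (simp add: \<rho>_def f_def)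
  have "cmod (z - M $$ (i, i)) * cmod (w $ i) \<le> \<rho> * ((M *\<^sub>v v) $ i - M $$ (i, i) * v $ i)"
    by (rule metzler_eigenvector_row_bound[OF M met w(1) eig v i dom])
  also have "\<dots> < - M $$ (i, i) * cmod (w $ i)"
    using Mv_neg[OF i] \<rho>_pos wi by (simp add: algebra_simps mult_pos_neg)
  finally have "cmod (z - M $$ (i, i)) * (\<rho> * v $ i) < (- M $$ (i, i)) * (\<rho> * v $ i)"
    using wi by simp
  hence "cmod (z - M $$ (i, i)) < - M $$ (i, i)"
    by (rule mult_right_less_imp_less) (use \<rho>_pos v_pos[OF i] in simp)
  thus "Re z < 0"
    using complex_Re_le_cmod[of "z - complex_of_real (M $$ (i, i))"] by simp
qed

lemma hurwitz_shifted_spectrum_bound: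
  assumes B: "B \<in> carrier_mat m m" and hur: "hurwitz B"
  obtains c c' where "0 < c'" "c' < c" "\<And>j. j < m \<Longrightarrow> 0 < B $$ (j, j) + c"
    "\<And>\<mu>. eigenvalue (map_mat complex_of_real B) \<mu> \<Longrightarrow> cmod (\<mu> + c) < c'"
proof -
  define Sp where "Sp = spectrum (map_mat complex_of_real B)"
  have fin: "finite Sp" unfolding Sp_def by (rule card_finite_spectrum) (use B in simp)
  have Re_neg: "Re \<mu> < 0" if "\<mu> \<in> Sp" for \<mu>
    using hur that unfolding hurwitz_def Sp_def spectrum_def by auto
  define q where "q \<mu> = (cmod \<mu>)^2 / (-2 * Re \<mu>)" for \<mu>
  have q_nonneg: "0 \<le> q \<mu>" if "\<mu> \<in> Sp" for \<mu>
    unfolding q_def by (rule divide_nonneg_pos) (use Re_neg[OF that] in auto)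
  define c where "c = 1 + (\<Sum>\<mu>\<in>Sp. q \<mu>) + (\<Sum>j<m. \<bar>B $$ (j, j)\<bar>)"
  have q_le: "q \<mu> \<le> (\<Sum>\<mu>\<in>Sp. q \<mu>)" if "\<mu> \<in> Sp" for \<mu>
    by (rule member_le_sum[OF that]) (use q_nonneg fin in auto)
  have sum_q: "0 \<le> (\<Sum>\<mu>\<in>Sp. q \<mu>)" using q_nonneg by (simp add: sum_nonneg)
  have diag_le: "\<bar>B $$ (j, j)\<bar> \<le> (\<Sum>j<m. \<bar>B $$ (j, j)\<bar>)" if "j < m" for j
    by (rule member_le_sum) (use that in auto)
  have sum_diag: "0 \<le> (\<Sum>j<m. \<bar>B $$ (j, j)\<bar>)" by (simp add: sum_nonneg)
  have c1: "1 \<le> c" using sum_q sum_diag by (simp add: c_def)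
  have close: "cmod (\<mu> + c) < c" if \<mu>: "\<mu> \<in> Sp" for \<mu>
  proof -
    have "q \<mu> < c" using q_le[OF \<mu>] sum_diag unfolding c_def by linarith
    moreover have "0 < -2 * Re \<mu>" using Re_neg[OF \<mu>] by simp
    ultimately have "(cmod \<mu>)^2 < c * (-2 * Re \<mu>)"
      unfolding q_def using pos_divide_less_eq by blast
    hence "(Re \<mu>)^2 + (Im \<mu>)^2 + 2 * c * Re \<mu> < 0"
      by (simp add: cmod_power2 algebra_simps)
    hence "(Re \<mu> + c)^2 + (Im \<mu>)^2 < c^2"
      by (simp add: power2_eq_square algebra_simps)
    hence "(cmod (\<mu> + c))^2 < c^2"
      by (simp add: cmod_power2)
    thus ?thesis using c1 by (simp add: power_less_imp_less_base)
  qed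
  \<comment> \<open>Since the spectrum is finite, the strict bound c can be lowered to a uniform c' < c.\<close>
  define r where "r = Max (insert 0 ((\<lambda>\<mu>. cmod (\<mu> + c)) ` Sp))"
  have r_nonneg: "0 \<le> r" and r_less: "r < c" and r_ge: "\<And>\<mu>. \<mu> \<in> Sp \<Longrightarrow> cmod (\<mu> + c) \<le> r"
    using fin close c1 by (auto simp: r_def)
  show ?thesis
  proof
    show "0 < (r + c) / 2" "(r + c) / 2 < c" using r_nonneg r_less c1 by auto
    show "0 < B $$ (j, j) + c" if "j < m" for j using diag_le[OF that] sum_q by (simp add: c_def)
    show "cmod (\<mu> + c) < (r + c) / 2" if "eigenvalue (map_mat complex_of_real B) \<mu>" for \<mu>
      using r_ge[of \<mu>] r_less that by (simp add: Sp_def spectrum_def)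
  qed
qed

lemma mat_pow_bounded_if_eigenvalues_in_unit_disc:
  fixes R :: "real mat"
  assumes R: "R \<in> carrier_mat m m"
    and ev: "\<And>\<nu>. eigenvalue (map_mat complex_of_real R) \<nu> \<Longrightarrow> cmod \<nu> < 1"
  obtains K where "\<And>k i j. i < m \<Longrightarrow> j < m \<Longrightarrow> \<bar>(R ^\<^sub>m k) $$ (i, j)\<bar> \<le> K"
proof (cases "m = 0")
  case False
  define Rc where "Rc = map_mat complex_of_real R"
  have Rc: "Rc \<in> carrier_mat m m" using R by (simp add: Rc_def)
  have "spectral_radius Rc \<in> norm ` spectrum Rc"
    by (rule spectral_radius_mem_max(1)[OF Rc]) (use False in simp)
  hence "spectral_radius Rc < 1" using ev by (auto simp: spectrum_def Rc_def)
  then obtain K where K: "\<And>k. norm_bound (Rc ^\<^sub>m k) K"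
    using spectral_radius_jnf_norm_bound_less_1_upper_triangular[OF Rc] by blast
  show ?thesis
  proof
    fix k i j assume "i < m" "j < m"
    moreover have "Rc ^\<^sub>m k = map_mat complex_of_real (R ^\<^sub>m k)"
      unfolding Rc_def by (rule of_real_hom.mat_hom_pow[OF R, symmetric])
    ultimately show "\<bar>(R ^\<^sub>m k) $$ (i, j)\<bar> \<le> K"
      using K[of k] R by (auto simp: norm_bound_def)
  qed
qed (use that in blast)

lemma le_pow_mult_if_le_mult_nonneg_mat:
  fixes R :: "real mat"
  assumes R: "R \<in> carrier_mat m m" and R_nonneg: "\<And>i j. i < m \<Longrightarrow> j < m \<Longrightarrow> 0 \<le> R $$ (i, j)"
    and \<theta>: "0 \<le> \<theta>" and y: "y \<in> carrier_vec m"
    and y_le: "\<And>i. i < m \<Longrightarrow> y $ i \<le> \<theta> * (R *\<^sub>v y) $ i" and i: "i < m"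
  shows "y $ i \<le> \<theta> ^ k * (R ^\<^sub>m k *\<^sub>v y) $ i"
  using y y_le i
proof (induction k arbitrary: y i)
  case 0
  thus ?case using R by simp
next
  case (Suc k)
  have R_mono: "(R *\<^sub>v a) $ j \<le> (R *\<^sub>v b) $ j"
    if "a \<in> carrier_vec m" "b \<in> carrier_vec m" "\<And>l. l < m \<Longrightarrow> a $ l \<le> b $ l" "j < m" for a b j
    unfolding mult_mat_vec_index_sum[OF R that(1,4)] mult_mat_vec_index_sum[OF R that(2,4)]
    using that R_nonneg by (intro sum_mono mult_left_mono) auto
  \<comment> \<open>The majorant y' inherits the hypothesis on y, so the induction hypothesis applies to it.\<close>
  define y' where "y' = \<theta> \<cdot>\<^sub>v (R *\<^sub>v y)"
  have y': "y' \<in> carrier_vec m" using R Suc.prems(1) by (simp add: y'_def)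
  have y_y': "y $ j \<le> y' $ j" if "j < m" for j using Suc.prems(2)[OF that] R that by (simp add: y'_def)
  have "y' $ j \<le> \<theta> * (R *\<^sub>v y') $ j" if j: "j < m" for j
    using R_mono[OF Suc.prems(1) y' y_y' j] \<theta> j R by (simp add: y'_def mult_left_mono)
  hence "y' $ i \<le> \<theta> ^ k * (R ^\<^sub>m k *\<^sub>v y') $ i" using Suc.IH[OF y'] Suc.prems(3) by blast
  also have "R ^\<^sub>m k *\<^sub>v y' = \<theta> \<cdot>\<^sub>v (R ^\<^sub>m Suc k *\<^sub>v y)"
  proof -
    have Rk: "R ^\<^sub>m k \<in> carrier_mat m m" using R by (rule pow_carrier_mat)
    show ?thesis
      using R Suc.prems(1) unfolding y'_def
      by (simp add: mult_mat_vec[OF Rk] assoc_mult_mat_vec[OF Rk R])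
  qed
  finally show ?case using y_y'[OF Suc.prems(3)] Suc.prems(3) R by (simp add: pow_carrier_mat ac_simps)
qed

lemma shift_scale_mult_vec_index:
  fixes B :: "'a::field mat"
  assumes B: "B \<in> carrier_mat m m" and y: "y \<in> carrier_vec m" and i: "i < m"
  shows "(mat m m (\<lambda>(i, j). (B $$ (i, j) + (if i = j then c else 0)) / d) *\<^sub>v y) $ i
           = ((B *\<^sub>v y) $ i + c * y $ i) / d"
proof -
  let ?R = "mat m m (\<lambda>(i, j). (B $$ (i, j) + (if i = j then c else 0)) / d)"
  have "(?R *\<^sub>v y) $ i = (\<Sum>j<m. ?R $$ (i, j) * y $ j)"
    by (rule mult_mat_vec_index_sum[OF _ y i]) simp
  also have "\<dots> = (\<Sum>j<m. B $$ (i, j) * y $ j / d) + (\<Sum>j<m. if i = j then c * y $ j / d else 0)"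
    unfolding sum.distrib[symmetric] using i by (intro sum.cong) (simp_all add: add_divide_distrib distrib_right)
  also have "\<dots> = ((B *\<^sub>v y) $ i + c * y $ i) / d"
    unfolding mult_mat_vec_index_sum[OF B y i] using i by (simp add: sum_divide_distrib[symmetric] add_divide_distrib)
  finally show ?thesis .
qed

lemma eigenvalue_of_shift_scale:
  fixes B :: "'a::field mat"
  assumes B: "B \<in> carrier_mat m m" and d: "d \<noteq> 0"
    and ev: "eigenvalue (mat m m (\<lambda>(i, j). (B $$ (i, j) + (if i = j then c else 0)) / d)) \<nu>"
  shows "eigenvalue B (d * \<nu> - c)"
proof -
  let ?R = "mat m m (\<lambda>(i, j). (B $$ (i, j) + (if i = j then c else 0)) / d)"
  obtain v where v: "v \<in> carrier_vec m" "v \<noteq> 0\<^sub>v m" and eq: "?R *\<^sub>v v = \<nu> \<cdot>\<^sub>v v"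
    using ev unfolding eigenvalue_def eigenvector_def by auto
  have "B *\<^sub>v v = (d * \<nu> - c) \<cdot>\<^sub>v v"
  proof (rule eq_vecI)
    fix i assume "i < dim_vec ((d * \<nu> - c) \<cdot>\<^sub>v v)"
    hence i: "i < m" using v by simp
    have "((B *\<^sub>v v) $ i + c * v $ i) / d = \<nu> * v $ i"
      using arg_cong[OF eq, of "\<lambda>u. u $ i"] shift_scale_mult_vec_index[OF B v(1) i] v i by simp
    thus "(B *\<^sub>v v) $ i = ((d * \<nu> - c) \<cdot>\<^sub>v v) $ i"
      using d v i by (simp add: field_simps)
  qed (use B v in auto)
  thus ?thesis using B v unfolding eigenvalue_def eigenvector_def by auto
qed

lemma metzler_hurwitz_nonpos_if_mult_nonneg:
  assumes B: "B \<in> carrier_mat m m" and met: "metzler B" and hur: "hurwitz B"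
    and x: "x \<in> carrier_vec m" and Bx: "\<And>i. i < m \<Longrightarrow> 0 \<le> (B *\<^sub>v x) $ i" and i: "i < m"
  shows "x $ i \<le> 0"
proof -
  obtain c' c where c': "0 < c'" "c' < c" and diag: "\<And>j. j < m \<Longrightarrow> 0 < B $$ (j, j) + c"
    and ev_B: "\<And>\<mu>. eigenvalue (map_mat complex_of_real B) \<mu> \<Longrightarrow> cmod (\<mu> + c) < c'"
    using hurwitz_shifted_spectrum_bound[OF B hur] by metis
  \<comment> \<open>R = (B + c I) / c' is entrywise nonnegative with spectrum in the open unit disc, and x \<le> (c'/c) R x.\<close>
  define R where "R = mat m m (\<lambda>(i, j). (B $$ (i, j) + (if i = j then c else 0)) / c')"
  define \<theta> where "\<theta> = c' / c"
  have R: "R \<in> carrier_mat m m" by (simp add: R_def)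
  have \<theta>_pos: "0 < \<theta>" using c' by (simp add: \<theta>_def)
  have R_nonneg: "0 \<le> R $$ (i, j)" if "i < m" "j < m" for i j
    using diag[of i] metzlerD[OF met B that] c' that by (cases "i = j") (auto simp: R_def)
  have ev_R: "cmod \<nu> < 1" if "eigenvalue (map_mat complex_of_real R) \<nu>" for \<nu>
  proof -
    have "map_mat complex_of_real R = mat m m (\<lambda>(i, j). (map_mat complex_of_real B $$ (i, j)
        + (if i = j then complex_of_real c else 0)) / complex_of_real c')"
      using B by (auto simp: R_def)
    hence "eigenvalue (map_mat complex_of_real B) (c' * \<nu> - c)"
      using eigenvalue_of_shift_scale[of _ m "complex_of_real c'"] B c' that by auto
    hence "cmod (c' * \<nu> - c + c) < c'" by (rule ev_B)
    thus ?thesis using c' by (simp add: norm_mult)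
  qed
  obtain K where K: "\<And>k i j. i < m \<Longrightarrow> j < m \<Longrightarrow> \<bar>(R ^\<^sub>m k) $$ (i, j)\<bar> \<le> K"
    using mat_pow_bounded_if_eigenvalues_in_unit_disc[OF R ev_R] by metis
  have x_le: "x $ j \<le> \<theta> * (R *\<^sub>v x) $ j" if "j < m" for j
    using Bx[OF that] c' unfolding R_def \<theta>_def shift_scale_mult_vec_index[OF B x that]
    by (simp add: field_simps)
  define X where "X = (\<Sum>j<m. \<bar>x $ j\<bar>)"
  have bound: "x $ i \<le> \<theta> ^ k * (K * X)" for k
  proof -
    have Rk: "R ^\<^sub>m k \<in> carrier_mat m m" using R by (rule pow_carrier_mat)
    have "(R ^\<^sub>m k *\<^sub>v x) $ i \<le> (\<Sum>j<m. \<bar>(R ^\<^sub>m k) $$ (i, j)\<bar> * \<bar>x $ j\<bar>)"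
      unfolding mult_mat_vec_index_sum[OF Rk x i]
      by (rule order_trans[OF abs_ge_self order_trans[OF sum_abs]]) (simp add: abs_mult)
    also have "\<dots> \<le> K * X"
      unfolding X_def sum_distrib_left using K i by (intro sum_mono mult_right_mono) auto
    finally have "\<theta> ^ k * (R ^\<^sub>m k *\<^sub>v x) $ i \<le> \<theta> ^ k * (K * X)"
      by (rule mult_left_mono) (use \<theta>_pos in simp)
    moreover have "x $ i \<le> \<theta> ^ k * (R ^\<^sub>m k *\<^sub>v x) $ i"
      using le_pow_mult_if_le_mult_nonneg_mat[OF R R_nonneg _ x x_le i] \<theta>_pos by simp
    ultimately show ?thesis by linarith
  qed
  have "(\<lambda>k. \<theta> ^ k * (K * X)) \<longlonglongrightarrow> 0"
    using c' by (simp add: \<theta>_def LIMSEQ_power_zero tendsto_mult_left_zero)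
  thus ?thesis by (rule LIMSEQ_le_const) (use bound in blast)
qed

lemma metzler_hurwitz_nonneg_if_mult_nonpos:
  assumes B: "B \<in> carrier_mat m m" and met: "metzler B" and hur: "hurwitz B"
    and x: "x \<in> carrier_vec m" and Bx: "\<And>i. i < m \<Longrightarrow> (B *\<^sub>v x) $ i \<le> 0" and i: "i < m"
  shows "0 \<le> x $ i"
proof -
  have "0 \<le> (B *\<^sub>v (- x)) $ j" if "j < m" for j
    using Bx[OF that] B x that by (simp add: mult_mat_vec_index_sum[of _ m m] sum_negf)
  from metzler_hurwitz_nonpos_if_mult_nonneg[OF B met hur _ this i] x i show ?thesis by simp
qed

lemma metzler_hurwitz_mult_eq_0:
  assumes B: "B \<in> carrier_mat m m" and met: "metzler B" and hur: "hurwitz B"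
    and x: "x \<in> carrier_vec m" and Bx: "B *\<^sub>v x = 0\<^sub>v m"
  shows "x = 0\<^sub>v m"
  using metzler_hurwitz_nonpos_if_mult_nonneg[OF B met hur x]
    metzler_hurwitz_nonneg_if_mult_nonpos[OF B met hur x] Bx x
  by (intro eq_vecI) (auto intro: order.antisym)

lemma metzler_hurwitz_pos_solution:
  assumes B: "B \<in> carrier_mat m m" and met: "metzler B" and hur: "hurwitz B"
  obtains w where "w \<in> carrier_vec m" "\<And>i. i < m \<Longrightarrow> 0 < w $ i" "\<And>i. i < m \<Longrightarrow> (B *\<^sub>v w) $ i = -1"
proof -
  have "det B \<noteq> 0"
    using metzler_hurwitz_mult_eq_0[OF B met hur] det_0_iff_vec_prod_zero_field[OF B] by blast
  from det_non_zero_imp_unit[OF B this, of "()"] obtain B' where B': "B' \<in> carrier_mat m m"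
    and inv: "B * B' = 1\<^sub>m m"
    by (auto simp: Units_def ring_mat_def)
  define w where "w = B' *\<^sub>v vec m (\<lambda>_. -1)"
  have w: "w \<in> carrier_vec m" using B' by (simp add: w_def)
  have Bw: "(B *\<^sub>v w) $ i = -1" if "i < m" for i
    using that B B' inv by (simp add: w_def assoc_mult_mat_vec[symmetric])
  have w_nonneg: "0 \<le> w $ j" if "j < m" for j
    using metzler_hurwitz_nonneg_if_mult_nonpos[OF B met hur w _ that] Bw by simp
  \<comment> \<open>A zero entry w_i would make the i-th row of B w a sum of nonnegative terms.\<close>
  have "0 < w $ i" if i: "i < m" for i
  proof (rule ccontr)
    assume "\<not> 0 < w $ i"
    hence "w $ i = 0" using w_nonneg[OF i] by simp
    hence "0 \<le> (\<Sum>j<m. B $$ (i, j) * w $ j)"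
      using metzlerD[OF met B i] w_nonneg by (intro sum_nonneg) (metis lessThan_iff mult_eq_0_iff mult_nonneg_nonneg)
    thus False using Bw[OF i] mult_mat_vec_index_sum[OF B w i] by simp
  qed
  with w Bw that show ?thesis by blast
qed

lemma mult_mat_vec_extend_index:
  assumes M: "M \<in> carrier_mat (Suc m) (Suc m)" and i: "i < Suc m"
  shows "(M *\<^sub>v vec (Suc m) (\<lambda>j. if j < m then p $ j else a)) $ i
           = (\<Sum>j<m. M $$ (i, j) * p $ j) + M $$ (i, m) * a"
  by (simp add: mult_mat_vec_index_sum[OF M _ i])

lemma leading_block_metzler:
  assumes "M \<in> carrier_mat (Suc m) (Suc m)" and "metzler M"
  shows "metzler (mat m m (\<lambda>(i, j). M $$ (i, j)))"
  using assms unfolding metzler_def by auto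

lemma leading_block_mult_vec_index:
  assumes "p \<in> carrier_vec m" and "i < m"
  shows "(mat m m (\<lambda>(i, j). M $$ (i, j)) *\<^sub>v p) $ i = (\<Sum>j<m. M $$ (i, j) * p $ j)"
  using assms by (subst mult_mat_vec_index_sum[of _ m m]) auto

lemma leading_block_solution_nonneg:
  assumes M: "M \<in> carrier_mat (Suc m) (Suc m)" and met: "metzler M"
    and hur: "hurwitz (mat m m (\<lambda>(i, j). M $$ (i, j)))"
    and x: "x \<in> carrier_vec m" and x_sol: "\<And>i. i < m \<Longrightarrow> (\<Sum>j<m. M $$ (i, j) * x $ j) + M $$ (i, m) = 0"
    and j: "j < m"
  shows "0 \<le> x $ j"
proof (rule metzler_hurwitz_nonneg_if_mult_nonpos[OF _ leading_block_metzler[OF M met] hur x _ j])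
  fix i assume i: "i < m"
  show "(mat m m (\<lambda>(i, j). M $$ (i, j)) *\<^sub>v x) $ i \<le> 0"
    unfolding leading_block_mult_vec_index[OF x i] using x_sol[OF i] metzlerD[OF met M, of i m] i by simp
qed simp

text \<open>
  In the following lemmas x solves the top rows of M (x, 1) = (0, s), i.e. x = - L^-1 a for the
  leading block L and the last column a of M; the last entry s = M_mm - b L^-1 a is the Schur
  complement of L in M.
\<close>

lemma schur_complement_neg_if_metzler_hurwitz:
  assumes M: "M \<in> carrier_mat (Suc m) (Suc m)" and met: "metzler M" and hur: "hurwitz M"
    and x: "x \<in> carrier_vec m" and x_sol: "\<And>i. i < m \<Longrightarrow> (\<Sum>j<m. M $$ (i, j) * x $ j) + M $$ (i, m) = 0"
  shows "(\<Sum>j<m. M $$ (m, j) * x $ j) + M $$ (m, m) < 0"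
proof (rule ccontr)
  assume s_nonneg: "\<not> ?thesis"
  define z where "z = vec (Suc m) (\<lambda>j. if j < m then x $ j else 1)"
  have "0 \<le> (M *\<^sub>v z) $ i" if "i < Suc m" for i
    using x_sol[of i] s_nonneg that unfolding z_def mult_mat_vec_extend_index[OF M that]
    by (cases "i < m") (auto simp: less_Suc_eq)
  from metzler_hurwitz_nonpos_if_mult_nonneg[OF M met hur _ this lessI] show False
    by (simp add: z_def)
qed

lemma hurwitz_if_schur_complement_neg:
  assumes M: "M \<in> carrier_mat (Suc m) (Suc m)" and met: "metzler M"
    and hur: "hurwitz (mat m m (\<lambda>(i, j). M $$ (i, j)))"
    and x: "x \<in> carrier_vec m" and x_sol: "\<And>i. i < m \<Longrightarrow> (\<Sum>j<m. M $$ (i, j) * x $ j) + M $$ (i, m) = 0"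
    and s_neg: "(\<Sum>j<m. M $$ (m, j) * x $ j) + M $$ (m, m) < 0"
  shows "hurwitz M"
proof -
  let ?L = "mat m m (\<lambda>(i, j). M $$ (i, j))"
  let ?s = "(\<Sum>j<m. M $$ (m, j) * x $ j) + M $$ (m, m)"
  have L: "?L \<in> carrier_mat m m" by simp
  note met_L = leading_block_metzler[OF M met]
  have off: "0 \<le> M $$ (i, j)" if "i < Suc m" "j < Suc m" "i \<noteq> j" for i j
    using metzlerD[OF met M] that by blast
  have x_nonneg: "0 \<le> x $ j" if "j < m" for j
    by (rule leading_block_solution_nonneg[OF M met hur x x_sol that])
  obtain w where w: "w \<in> carrier_vec m" and w_pos: "\<And>i. i < m \<Longrightarrow> 0 < w $ i"
    and Lw: "\<And>i. i < m \<Longrightarrow> (?L *\<^sub>v w) $ i = -1"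
    using metzler_hurwitz_pos_solution[OF L met_L hur] by metis
  define E where "E = (\<Sum>j<m. M $$ (m, j) * w $ j)"
  have E: "0 \<le> E" unfolding E_def using off w_pos by (intro sum_nonneg) (simp add: less_imp_le)
  \<comment> \<open>Perturbing (x, 1) along (w, 0) makes the top rows strictly negative; \<epsilon> keeps the last row negative.\<close>
  define \<epsilon> where "\<epsilon> = - ?s / (2 * (1 + E))"
  have \<epsilon>: "0 < \<epsilon>" using s_neg E by (simp add: \<epsilon>_def divide_pos_pos)
  have \<epsilon>E: "\<epsilon> * E < - ?s"
  proof -
    have "\<epsilon> * E = (- ?s / 2) * (E / (1 + E))" using E by (simp add: \<epsilon>_def field_simps)
    also have "\<dots> \<le> - ?s / 2" using s_neg E by (intro mult_left_le) auto
    finally show ?thesis using s_neg by (simp add: field_simps)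
  qed
  define v where "v = vec (Suc m) (\<lambda>j. if j < m then (x + \<epsilon> \<cdot>\<^sub>v w) $ j else 1)"
  show ?thesis
  proof (rule hurwitz_if_metzler_pos_vec[OF M met])
    show "v \<in> carrier_vec (Suc m)" by (simp add: v_def)
    show "0 < v $ i" if "i < Suc m" for i
      using x_nonneg[of i] w_pos[of i] \<epsilon> x w that by (simp add: v_def add_nonneg_pos)
    show "(M *\<^sub>v v) $ i < 0" if i: "i < Suc m" for i
    proof (cases "i < m")
      case True
      have "(M *\<^sub>v v) $ i = ((\<Sum>j<m. M $$ (i, j) * x $ j) + M $$ (i, m)) + \<epsilon> * (?L *\<^sub>v w) $ i"
        unfolding v_def mult_mat_vec_extend_index[OF M i] leading_block_mult_vec_index[OF w True]
        using x w by (simp add: algebra_simps sum.distrib sum_distrib_left)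
      thus ?thesis using x_sol[OF True] Lw[OF True] \<epsilon> by simp
    next
      case False
      hence "i = m" using i by simp
      hence "(M *\<^sub>v v) $ i = ?s + \<epsilon> * E"
        unfolding v_def mult_mat_vec_extend_index[OF M i] E_def
        using x w by (simp add: algebra_simps sum.distrib sum_distrib_left)
      thus ?thesis using \<epsilon>E by simp
    qed
  qed
qed

lemma metzler_hurwitz_iff_schur_complement_neg:
  assumes "M \<in> carrier_mat (Suc m) (Suc m)" and "metzler M"
    and "hurwitz (mat m m (\<lambda>(i, j). M $$ (i, j)))"
    and "x \<in> carrier_vec m" and "\<And>i. i < m \<Longrightarrow> (\<Sum>j<m. M $$ (i, j) * x $ j) + M $$ (i, m) = 0"
  shows "hurwitz M \<longleftrightarrow> (\<Sum>j<m. M $$ (m, j) * x $ j) + M $$ (m, m) < 0"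
  using schur_complement_neg_if_metzler_hurwitz[of M m x] hurwitz_if_schur_complement_neg[of M m x] assms
  by blast

lemma S_mat_conj_eq_leading_block:
  assumes A: "A \<in> carrier_mat n n"
  shows "transpose_mat (S_mat n) * A * S_mat n = mat (n - 1) (n - 1) (\<lambda>(i, j). A $$ (i, j))"
proof (rule eq_matI)
  fix i j assume i: "i < dim_row (mat (n - 1) (n - 1) (\<lambda>(i, j). A $$ (i, j)))"
    and j: "j < dim_col (mat (n - 1) (n - 1) (\<lambda>(i, j). A $$ (i, j)))"
  have S: "S_mat n \<in> carrier_mat n (n - 1)" by (simp add: S_mat_def)
  have row: "(transpose_mat (S_mat n) * A) $$ (i, k) = A $$ (i, k)" if "k < n" for k
    using i that A S by (auto simp: scalar_prod_def S_mat_def if_distrib[of "\<lambda>a. a * _"] cong: if_cong)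
  have "(transpose_mat (S_mat n) * A * S_mat n) $$ (i, j) = A $$ (i, j)"
    using i j A S row by (auto simp: scalar_prod_def S_mat_def if_distrib[of "\<lambda>a. _ * a"] cong: if_cong)
  thus "(transpose_mat (S_mat n) * A * S_mat n) $$ (i, j) = mat (n - 1) (n - 1) (\<lambda>(i, j). A $$ (i, j)) $$ (i, j)"
    using i j by simp
qed (use A in \<open>auto simp: S_mat_def\<close>)

lemma index_minus_smult_En_mat:
  assumes "A \<in> carrier_mat n n" and "i < n" and "j < n"
  shows "(A - u \<cdot>\<^sub>m En_mat n) $$ (i, j) = A $$ (i, j) - (if i = n - 1 \<and> j = n - 1 then u else 0)"
  using assms by (simp add: En_mat_def e_last_def)

lemma hurwitz_minus_smult_En_mat_iff:
  assumes A: "A \<in> carrier_mat (Suc m) (Suc m)" and met: "metzler A"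
    and hur: "hurwitz (mat m m (\<lambda>(i, j). A $$ (i, j)))"
    and x: "x \<in> carrier_vec m" and x_sol: "\<And>i. i < m \<Longrightarrow> (\<Sum>j<m. A $$ (i, j) * x $ j) + A $$ (i, m) = 0"
  shows "hurwitz (A - u \<cdot>\<^sub>m En_mat (Suc m)) \<longleftrightarrow> (\<Sum>j<m. A $$ (m, j) * x $ j) + A $$ (m, m) - u < 0"
proof -
  define Ab where "Ab = A - u \<cdot>\<^sub>m En_mat (Suc m)"
  have Ab: "Ab \<in> carrier_mat (Suc m) (Suc m)" using A by (auto simp: Ab_def En_mat_def intro!: carrier_matI)
  have Ab_idx: "Ab $$ (i, j) = A $$ (i, j) - (if i = m \<and> j = m then u else 0)"
    if "i < Suc m" "j < Suc m" for i j
    using index_minus_smult_En_mat[OF A that] by (simp add: Ab_def)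
  have "metzler Ab" using met A Ab Ab_idx by (auto simp: metzler_def)
  moreover have "mat m m (\<lambda>(i, j). Ab $$ (i, j)) = mat m m (\<lambda>(i, j). A $$ (i, j))"
    by (auto simp: Ab_idx)
  moreover have "(\<Sum>j<m. Ab $$ (i, j) * x $ j) + Ab $$ (i, m) = 0" if "i < m" for i
    using x_sol[OF that] that by (simp add: Ab_idx)
  moreover have "(\<Sum>j<m. Ab $$ (m, j) * x $ j) + Ab $$ (m, m) = (\<Sum>j<m. A $$ (m, j) * x $ j) + A $$ (m, m) - u"
    by (simp add: Ab_idx)
  ultimately show ?thesis
    using metzler_hurwitz_iff_schur_complement_neg[OF Ab _ _ x] hur by (simp add: Ab_def)
qed

lemma metzler_inverse_last_column:
  assumes M: "M \<in> carrier_mat (Suc m) (Suc m)" and met: "metzler M"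
    and hur: "hurwitz (mat m m (\<lambda>(i, j). M $$ (i, j)))" and M_mm: "0 < M $$ (m, m)"
    and M': "M' \<in> carrier_mat (Suc m) (Suc m)" and inv: "M * M' = 1\<^sub>m (Suc m)"
  obtains x t where "x \<in> carrier_vec m" "0 < t" "(M' *\<^sub>v unit_vec (Suc m) m) $ m = t"
    "\<And>i. i < m \<Longrightarrow> (\<Sum>j<m. M $$ (i, j) * x $ j) + M $$ (i, m) = 0"
    "(\<Sum>j<m. M $$ (m, j) * x $ j) + M $$ (m, m) = 1 / t"
proof -
  define y where "y = M' *\<^sub>v unit_vec (Suc m) m"
  define t where "t = y $ m"
  have y: "y \<in> carrier_vec (Suc m)" using M' by (simp add: y_def)
  have My: "M *\<^sub>v y = unit_vec (Suc m) m"
    using M M' inv by (simp add: y_def assoc_mult_mat_vec[symmetric])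
  have row: "(\<Sum>j<m. M $$ (i, j) * y $ j) + M $$ (i, m) * t = (if i = m then 1 else 0)" if "i < Suc m" for i
    using arg_cong[OF My, of "\<lambda>v. v $ i"] that unfolding mult_mat_vec_index_sum[OF M y that]
    by (simp add: t_def)
  let ?L = "mat m m (\<lambda>(i, j). M $$ (i, j))"
  have "t \<noteq> 0"
  proof
    assume t: "t = 0"
    define p where "p = vec m (\<lambda>j. y $ j)"
    have p: "p \<in> carrier_vec m" by (simp add: p_def)
    have "?L *\<^sub>v p = 0\<^sub>v m"
    proof (rule eq_vecI)
      fix i assume "i < dim_vec (0\<^sub>v m)"
      hence i: "i < m" by simp
      show "(?L *\<^sub>v p) $ i = 0\<^sub>v m $ i"
        unfolding leading_block_mult_vec_index[OF p i] using row[of i] t i by (simp add: p_def)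
    qed simp
    hence "p = 0\<^sub>v m"
      using metzler_hurwitz_mult_eq_0[OF _ leading_block_metzler[OF M met] hur p] by simp
    thus False using row[of m] t by (simp add: p_def vec_eq_iff)
  qed
  define x where "x = vec m (\<lambda>j. y $ j / t)"
  have x: "x \<in> carrier_vec m" by (simp add: x_def)
  have x_sum: "(\<Sum>j<m. M $$ (i, j) * x $ j) = (\<Sum>j<m. M $$ (i, j) * y $ j) / t" for i
    unfolding sum_divide_distrib by (rule sum.cong) (simp_all add: x_def)
  have x_sol: "(\<Sum>j<m. M $$ (i, j) * x $ j) + M $$ (i, m) = 0" if "i < m" for i
    using row[of i] that \<open>t \<noteq> 0\<close> unfolding x_sum by (simp add: field_simps)
  have x_last: "(\<Sum>j<m. M $$ (m, j) * x $ j) + M $$ (m, m) = 1 / t"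
    using row[of m] \<open>t \<noteq> 0\<close> unfolding x_sum by (simp add: field_simps)
  have "0 \<le> M $$ (m, j) * x $ j" if "j < m" for j
    using leading_block_solution_nonneg[OF M met hur x x_sol that] metzlerD[OF met M, of m j] that by simp
  hence "0 \<le> (\<Sum>j<m. M $$ (m, j) * x $ j)" by (intro sum_nonneg) simp
  hence "0 < 1 / t" using x_last M_mm by linarith
  hence "0 < t" by simp
  with x x_sol x_last show ?thesis using that by (simp add: y_def t_def)
qed

theorem mainTheorem12:
  fixes n :: nat and A Ainv :: "real mat" and b0 :: "real vec" and r :: real
  assumes "n \<ge> 2"
    and "A \<in> carrier_mat n n"
    and "metzler A"
    and "output_unstable A"
    and "det A \<noteq> 0"
    and "Ainv \<in> carrier_mat n n" and "A * Ainv = 1\<^sub>m n" and "Ainv * A = 1\<^sub>m n"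
    and "b0 \<in> carrier_vec n" and "\<forall>i < n. 0 \<le> b0 $ i"
    and "r > 0"
  shows "let g0 = - (e_last n \<bullet> (Ainv *\<^sub>v b0));
             gn = - (e_last n \<bullet> (Ainv *\<^sub>v e_last n));
             u = (g0 - r) / (gn * r)
         in hurwitz (A - u \<cdot>\<^sub>m En_mat n) \<longleftrightarrow> g0 < 0"
proof -
  obtain m where n: "n = Suc m" using assms(1) by (cases n) auto
  have A: "A \<in> carrier_mat (Suc m) (Suc m)" using assms(2) n by simp
  let ?L = "mat m m (\<lambda>(i, j). A $$ (i, j))"
  have ou: "hurwitz (transpose_mat (S_mat n) * A * S_mat n)" "0 < e_last n \<bullet> (A *\<^sub>v e_last n)"
    using assms(2,4) unfolding output_unstable_def by auto
  have hur_L: "hurwitz ?L" using ou(1) S_mat_conj_eq_leading_block[OF assms(2)] n by simp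
  have A_mm: "0 < A $$ (m, m)" using ou(2) A n by (simp add: e_last_def)
  have Ainv: "Ainv \<in> carrier_mat (Suc m) (Suc m)" and inv: "A * Ainv = 1\<^sub>m (Suc m)"
    using assms(6,7) n by simp_all
  obtain x t where x: "x \<in> carrier_vec m" and t: "0 < t" "(Ainv *\<^sub>v unit_vec (Suc m) m) $ m = t"
    and x_sol: "\<And>i. i < m \<Longrightarrow> (\<Sum>j<m. A $$ (i, j) * x $ j) + A $$ (i, m) = 0"
    and x_last: "(\<Sum>j<m. A $$ (m, j) * x $ j) + A $$ (m, m) = 1 / t"
    using metzler_inverse_last_column[OF A assms(3) hur_L A_mm Ainv inv] by blast
  have gn: "e_last n \<bullet> (Ainv *\<^sub>v e_last n) = t"
    using Ainv t(2) n by (simp add: e_last_def)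
  define g0 where "g0 = - (e_last n \<bullet> (Ainv *\<^sub>v b0))"
  define u where "u = (g0 - r) / (- t * r)"
  have schur: "1 / t - u = g0 / (t * r)"
    using t(1) assms(11) by (simp add: u_def field_simps)
  have "hurwitz (A - u \<cdot>\<^sub>m En_mat n) \<longleftrightarrow> (\<Sum>j<m. A $$ (m, j) * x $ j) + A $$ (m, m) - u < 0"
    unfolding n by (rule hurwitz_minus_smult_En_mat_iff[OF A assms(3) hur_L x x_sol])
  also have "\<dots> \<longleftrightarrow> g0 / (t * r) < 0"
    using x_last schur by simp
  also have "\<dots> \<longleftrightarrow> g0 < 0" using mult_pos_pos[OF t(1) assms(11)] by (auto simp: divide_less_0_iff)
  finally show ?thesis unfolding Let_def gn g0_def[symmetric] u_def by simp
qed

end
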